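(* As formal power series in $q$, $$\frac{1}{\prod_{i=1}^\infty(1-q^{ki})}\,m^\infty_\nu(q,k)=\sum_{\delta\in\mathcal P}q^{k|\delta|}\sum_{T\in D(\nu)}q^{\sum_{i=1}^k|\lambda_i(T)|}.$$
   Context: Identify a partition $\lambda=(a_1\ge a_2\ge\cdots)$ with $\sum_ja_j\epsilon_j$ in $\Lambda=\bigoplus_{j\ge1}\mathbb Z\epsilon_j$; put $\omega_i=\epsilon_1+\dots+\epsilon_i$; partitions are exactly elements with all $\omega$-coordinates $\ge0$. For $x,y\in\Lambda$, $y\le x$ means $x-y$ has all $\omega$-coordinates $\ge0$. $\mathcal P$ = partitions, $\mathcal P^k$ = $k$-tuples; $|\lambda|$ = number of boxes. $SST(\nu)$ = semistandard tableaux of shape $\nu$ with entries in $\mathbb Z_{>0}$, with the standard $\mathfrak{gl}_\infty$-crystal structure. For $T\in SST(\nu)$: $\mathrm{wt}(T)=\sum_j(\#\text{entries }j)\epsilon_j$, $\varepsilon_i(T)=\max\{m\ge0:\tilde e_i^mT\ne0\}$, $\varepsilon(T)=\sum_i\varepsilon_i(T)\omega_i$. $\mathrm{CLR}^\lambda_{\alpha,\nu}=\{T\in SST(\nu):\varepsilon(T)\le\alpha,\ \alpha+\mathrm{wt}(T)=\lambda\}$; it is known that $|\mathrm{CLR}^\lambda_{\alpha,\nu}|=c^\lambda_{\alpha,\nu}$, the Littlewood–Richardson coefficient. Fix $k\ge1$, partitions $\nu=(\nu_1^+,\nu_1^-,\dots,\nu_k^+,\nu_k^-)$; indices cyclic mod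 $k$ ($\lambda_0:=\lambda_k$). $\underline{SST}(\nu)=\prod_iSST(\nu_i^+)\times SST(\nu_i^-)$, $T=(T_1^+,T_1^-,\dots,T_k^+,T_k^-)$, $\mathrm{wt}(T_i)=\mathrm{wt}(T_i^+)-\mathrm{wt}(T_i^-)$. $\underline{\mathrm{CLR}}^\lambda_{\alpha,\nu}=\prod_{i=1}^k\mathrm{CLR}^{\lambda_i}_{\alpha_i,\nu_i^+}\times\mathrm{CLR}^{\lambda_{i-1}}_{\alpha_i,\nu_i^-}$. $D(\nu)$ = set of $T\in\underline{SST}(\nu)$ lying in some $\underline{\mathrm{CLR}}^\lambda_{\alpha,\nu}$ with $\lambda,\alpha\in\mathcal P^k$ (distinguished tableaux). For $T\in D(\nu)$, $\lambda_{\min}(T)$ is the coordinatewise (in $\omega$-coordinates) maximum of $S_i^\pm=\varepsilon(T_i^\pm)+\mathrm{wt}(T_i^+)-\sum_{j=2}^i\mathrm{wt}(T_j)$, $i=1,\dots,k$, and $\lambda_i(T)=\lambda_{\min}(T)+\sum_{j=2}^i\mathrm{wt}(T_j)$ (a partition). The stable $q$-multiplicity is $$m^\infty_\nu(q,k)=\Big[\prod_{i=1}^\infty(1-q^{ki})\Big]\sum_{\alpha,\lambda\in\mathcal P^k}q^{\sum_i|\lambda_i|}\prod_{i=1}^kc^{\lambda_i}_{\alpha_i,\nu_i^+}c^{\lambda_{i-1}}_{\alpha_i,\nu_i^-}.$$ *)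

theory Defs
  imports "HOL-Analysis.Analysis" "HOL-Computational_Algebra.Formal_Power_Series"
begin

(* Elements of Lambda = direct sum of Z eps_j (j >= 1): finitely supported functions nat => int,
   with the unused index 0 forced to be 0. *)
type_synonym lwt = "nat \<Rightarrow> int"
(* A tableau: (row, column) => entry, rows/columns 1-based, row 1 on top, 0 outside the shape. *)
type_synonym tab = "nat \<times> nat \<Rightarrow> nat"

definition in_Lambda :: "lwt \<Rightarrow> bool" where
  "in_Lambda x \<longleftrightarrow> x 0 = 0 \<and> finite {j. x j \<noteq> 0}"

(* omega-coordinates: x = sum_i (x_i - x_{i+1}) omega_i *)
definition omega_coord :: "lwt \<Rightarrow> nat \<Rightarrow> int" where
  "omega_coord x i = x i - x (Suc i)"

(* the element sum_{i>=1} c_i omega_i (c finitely supported) *)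
definition from_omega :: "(nat \<Rightarrow> int) \<Rightarrow> lwt" where
  "from_omega c j = (if j = 0 then 0 else (\<Sum>i\<in>{i. j \<le> i \<and> c i \<noteq> 0}. c i))"

definition is_partition :: "lwt \<Rightarrow> bool" where
  "is_partition x \<longleftrightarrow> in_Lambda x \<and> (\<forall>i\<ge>1. omega_coord x i \<ge> 0)"

definition dom_le :: "lwt \<Rightarrow> lwt \<Rightarrow> bool" where
  "dom_le y x \<longleftrightarrow> (\<forall>i\<ge>1. omega_coord (\<lambda>j. x j - y j) i \<ge> 0)"

definition boxes :: "lwt \<Rightarrow> nat" where
  "boxes x = nat (\<Sum>j\<in>{j. x j \<noteq> 0}. x j)"

definition cells :: "lwt \<Rightarrow> (nat \<times> nat) set" where
  "cells \<nu> = {(r, c). 1 \<le> r \<and> 1 \<le> c \<and> int c \<le> \<nu> r}"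

definition SST :: "lwt \<Rightarrow> tab set" where
  "SST \<nu> = {T. (\<forall>p. p \<notin> cells \<nu> \<longrightarrow> T p = 0)
              \<and> (\<forall>p\<in>cells \<nu>. 1 \<le> T p)
              \<and> (\<forall>r c. (r, c) \<in> cells \<nu> \<and> (r, Suc c) \<in> cells \<nu> \<longrightarrow> T (r, c) \<le> T (r, Suc c))
              \<and> (\<forall>r c. (r, c) \<in> cells \<nu> \<and> (Suc r, c) \<in> cells \<nu> \<longrightarrow> T (r, c) < T (Suc r, c))}"

definition wt_tab :: "tab \<Rightarrow> lwt" where
  "wt_tab T j = (if j = 0 then 0 else int (card {p. T p = j}))"

definition nrows :: "lwt \<Rightarrow> nat" where
  "nrows \<nu> = card {j. \<nu> j \<noteq> 0}"

definition read_cells :: "lwt \<Rightarrow> (nat \<times> nat) list" where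
  "read_cells \<nu> = concat (map (\<lambda>r. map (\<lambda>c. (r, c)) [1..<nat (\<nu> r) + 1]) (rev [1..<nrows \<nu> + 1]))"

(* signature rule: scanning left to right, a letter i+1 is pushed, a letter i cancels the
   nearest preceding uncancelled i+1.  Result: positions of the uncancelled letters i+1,
   the leftmost one being the last element of the list. *)
fun sig_stack :: "nat \<Rightarrow> 'p list \<Rightarrow> ('p \<times> nat) list \<Rightarrow> 'p list" where
  "sig_stack i st [] = st"
| "sig_stack i st ((p, x) # w) =
     (if x = Suc i then sig_stack i (p # st) w
      else if x = i then sig_stack i (drop 1 st) w
      else sig_stack i st w)"

(* Kashiwara operator e~_i on SST(nu); None stands for 0 *)
definition e_tab :: "lwt \<Rightarrow> nat \<Rightarrow> tab \<Rightarrow> tab option" where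
  "e_tab \<nu> i T = (let st = sig_stack i [] (map (\<lambda>p. (p, T p)) (read_cells \<nu>))
                   in if st = [] then None else Some (T(last st := i)))"

fun e_pow :: "lwt \<Rightarrow> nat \<Rightarrow> nat \<Rightarrow> tab \<Rightarrow> tab option" where
  "e_pow \<nu> i 0 T = Some T"
| "e_pow \<nu> i (Suc m) T = (case e_pow \<nu> i m T of None \<Rightarrow> None | Some T' \<Rightarrow> e_tab \<nu> i T')"

definition eps_i :: "lwt \<Rightarrow> nat \<Rightarrow> tab \<Rightarrow> nat" where
  "eps_i \<nu> i T = (GREATEST m. e_pow \<nu> i m T \<noteq> None)"

definition eps_vec :: "lwt \<Rightarrow> tab \<Rightarrow> lwt" where
  "eps_vec \<nu> T = from_omega (\<lambda>i. if i = 0 then 0 else int (eps_i \<nu> i T))"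

definition CLR :: "lwt \<Rightarrow> lwt \<Rightarrow> lwt \<Rightarrow> tab set" where
  "CLR lam \<alpha> \<nu> = {T \<in> SST \<nu>. dom_le (eps_vec \<nu> T) \<alpha> \<and> (\<forall>j. \<alpha> j + wt_tab T j = lam j)}"

(* Littlewood-Richardson coefficient, via the known identity |CLR| = c *)
definition lr_coeff :: "lwt \<Rightarrow> lwt \<Rightarrow> lwt \<Rightarrow> nat" where
  "lr_coeff lam \<alpha> \<nu> = card (CLR lam \<alpha> \<nu>)"

definition prev :: "nat \<Rightarrow> nat \<Rightarrow> nat" where
  "prev k i = (if i = 1 then k else i - 1)"

definition is_ptuple :: "nat \<Rightarrow> (nat \<Rightarrow> lwt) \<Rightarrow> bool" where
  "is_ptuple k x \<longleftrightarrow> (\<forall>i\<in>{1..k}. is_partition (x i)) \<and> (\<forall>i. i \<notin> {1..k} \<longrightarrow> x i = (\<lambda>_. 0))"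

definition prodP :: "nat \<Rightarrow> real fps" where
  "prodP k = Abs_fps (\<lambda>n. fps_nth (\<Prod>i\<in>{1..n}. 1 - fps_X ^ (k * i)) n)"

definition m_inf :: "nat \<Rightarrow> (nat \<Rightarrow> lwt) \<Rightarrow> (nat \<Rightarrow> lwt) \<Rightarrow> real fps" where
  "m_inf k nup num = prodP k * Abs_fps (\<lambda>n.
     infsum (\<lambda>p. real (\<Prod>i\<in>{1..k}. lr_coeff (snd p i) (fst p i) (nup i)
                                    * lr_coeff (snd p (prev k i)) (fst p i) (num i)))
       {(\<alpha>, lam). is_ptuple k \<alpha> \<and> is_ptuple k lam \<and> (\<Sum>i\<in>{1..k}. boxes (lam i)) = n})"

(* distinguished tableaux; T = (T^+, T^-) with T^+ i = T_i^+, T^- i = T_i^- *)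
definition Dtab :: "nat \<Rightarrow> (nat \<Rightarrow> lwt) \<Rightarrow> (nat \<Rightarrow> lwt) \<Rightarrow> ((nat \<Rightarrow> tab) \<times> (nat \<Rightarrow> tab)) set" where
  "Dtab k nup num = {(Tp, Tm).
     (\<forall>i\<in>{1..k}. Tp i \<in> SST (nup i) \<and> Tm i \<in> SST (num i))
     \<and> (\<forall>i. i \<notin> {1..k} \<longrightarrow> Tp i = (\<lambda>_. 0) \<and> Tm i = (\<lambda>_. 0))
     \<and> (\<exists>lam \<alpha>. is_ptuple k lam \<and> is_ptuple k \<alpha> \<and>
          (\<forall>i\<in>{1..k}. Tp i \<in> CLR (lam i) (\<alpha> i) (nup i) \<and> Tm i \<in> CLR (lam (prev k i)) (\<alpha> i) (num i)))}"

definition cumwt :: "(nat \<Rightarrow> tab) \<Rightarrow> (nat \<Rightarrow> tab) \<Rightarrow> nat \<Rightarrow> lwt" where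
  "cumwt Tp Tm i = (\<lambda>j. \<Sum>l\<in>{2..i}. wt_tab (Tp l) j - wt_tab (Tm l) j)"

definition S_plus :: "(nat \<Rightarrow> lwt) \<Rightarrow> (nat \<Rightarrow> tab) \<Rightarrow> (nat \<Rightarrow> tab) \<Rightarrow> nat \<Rightarrow> lwt" where
  "S_plus nup Tp Tm i = (\<lambda>j. eps_vec (nup i) (Tp i) j + wt_tab (Tp i) j - cumwt Tp Tm i j)"

definition S_minus :: "(nat \<Rightarrow> lwt) \<Rightarrow> (nat \<Rightarrow> tab) \<Rightarrow> (nat \<Rightarrow> tab) \<Rightarrow> nat \<Rightarrow> lwt" where
  "S_minus num Tp Tm i = (\<lambda>j. eps_vec (num i) (Tm i) j + wt_tab (Tp i) j - cumwt Tp Tm i j)"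

definition lam_min :: "nat \<Rightarrow> (nat \<Rightarrow> lwt) \<Rightarrow> (nat \<Rightarrow> lwt) \<Rightarrow> (nat \<Rightarrow> tab) \<Rightarrow> (nat \<Rightarrow> tab) \<Rightarrow> lwt" where
  "lam_min k nup num Tp Tm = from_omega (\<lambda>a.
     Max ((\<lambda>i. omega_coord (S_plus nup Tp Tm i) a) ` {1..k}
          \<union> (\<lambda>i. omega_coord (S_minus num Tp Tm i) a) ` {1..k}))"

definition lam_T :: "nat \<Rightarrow> (nat \<Rightarrow> lwt) \<Rightarrow> (nat \<Rightarrow> lwt) \<Rightarrow> (nat \<Rightarrow> tab) \<Rightarrow> (nat \<Rightarrow> tab) \<Rightarrow> nat \<Rightarrow> lwt" where
  "lam_T k nup num Tp Tm i = (\<lambda>j. lam_min k nup num Tp Tm j + cumwt Tp Tm i j)"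

end

theory Submission
  imports Defs
begin

text \<open>
  Fix \<open>T \<in> D(\<nu>)\<close>. The pairs \<open>(\<alpha>, \<lambda>)\<close> with \<open>T \<in> CLR\<^sup>\<lambda>\<^sub>\<alpha>\<^sub>,\<^sub>\<nu>\<close> are rigid: consecutive conditions
  share \<open>\<alpha>\<^sub>i\<close>, so \<open>\<lambda>\<^sub>i = \<lambda>\<^sub>1 + \<Sum>\<^sub>j\<^sub>=\<^sub>2\<^sup>i wt(T\<^sub>j)\<close> and \<open>\<alpha>\<^sub>i = \<lambda>\<^sub>i - wt(T\<^sub>i\<^sup>+)\<close>, and everything is
  determined by \<open>\<lambda>\<^sub>1\<close>. The conditions \<open>\<epsilon>(T\<^sub>i\<^sup>\<plusminus>) \<le> \<alpha>\<^sub>i\<close> say precisely that \<open>\<lambda>\<^sub>1\<close> dominates every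
  \<open>S\<^sub>i\<^sup>\<plusminus>\<close>, i.e. \<open>\<lambda>\<^sub>1 - \<lambda>_min(T)\<close> is a partition \<open>\<delta>\<close>. Conversely every partition \<open>\<delta>\<close> arises, because
  \<open>\<epsilon>(T)\<close> and \<open>\<epsilon>(T) + wt(T)\<close> have non-negative \<open>\<omega>\<close>-coordinates (two estimates read off the
  signature rule), which makes all \<open>\<lambda>\<^sub>i\<close> and \<open>\<alpha>\<^sub>i\<close> partitions. So \<open>(\<alpha>, \<lambda>, T) \<mapsto> (\<delta>, T)\<close> is a
  bijection onto \<open>\<P> \<times> D(\<nu>)\<close> with \<open>\<Sum>|\<lambda>\<^sub>i| = k|\<delta>| + \<Sum>|\<lambda>\<^sub>i(T)|\<close>, and comparing coefficients of
  \<open>q\<^sup>n\<close> gives the identity; the factor \<open>\<Prod>(1 - q\<^sup>k\<^sup>i)\<close> cancels since its constant term is \<open>1\<close>.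
\<close>

lemma infsum_card_eq_card_Sigma:
  assumes "finite (Sigma A W)"
  shows "infsum (\<lambda>p. real (card (W p))) A = real (card (Sigma A W))"
proof -
  let ?S = "fst ` Sigma A W"
  have S: "finite ?S" "?S \<subseteq> A" using assms by auto
  have W: "finite (W p)" if "p \<in> ?S" for p
  proof -
    have "W p \<subseteq> snd ` Sigma A W" using that by force
    then show ?thesis using assms finite_subset by blast
  qed
  have "infsum (\<lambda>p. real (card (W p))) A = infsum (\<lambda>p. real (card (W p))) ?S"
  proof (rule infsum_cong_neutral)
    fix p assume "p \<in> A - ?S"
    then have "W p = {}" by force
    then show "real (card (W p)) = 0" by simp
  qed auto
  also have "\<dots> = real (\<Sum>p\<in>?S. card (W p))" using S by simp
  also have "(\<Sum>p\<in>?S. card (W p)) = card (Sigma ?S W)" using S W by (simp add: card_SigmaI)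
  also have "Sigma ?S W = Sigma A W" by force
  finally show ?thesis .
qed

section \<open>The lattice \<open>\<Lambda>\<close> and partitions\<close>

lemma in_Lambda_add: "in_Lambda x \<Longrightarrow> in_Lambda y \<Longrightarrow> in_Lambda (\<lambda>j. x j + y j)"
  unfolding in_Lambda_def
  by (auto intro: finite_subset[of _ "{j. x j \<noteq> 0} \<union> {j. y j \<noteq> 0}"])

lemma in_Lambda_diff: "in_Lambda x \<Longrightarrow> in_Lambda y \<Longrightarrow> in_Lambda (\<lambda>j. x j - y j)"
  unfolding in_Lambda_def
  by (auto intro: finite_subset[of _ "{j. x j \<noteq> 0} \<union> {j. y j \<noteq> 0}"])

lemma in_Lambda_sum:
  "finite A \<Longrightarrow> (\<And>l. l \<in> A \<Longrightarrow> in_Lambda (f l)) \<Longrightarrow> in_Lambda (\<lambda>j. \<Sum>l\<in>A. f l j)"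
proof (induction A rule: finite_induct)
  case empty then show ?case by (simp add: in_Lambda_def)
next
  case (insert a A)
  then have "in_Lambda (\<lambda>j. f a j + (\<Sum>l\<in>A. f l j))" by (intro in_Lambda_add) auto
  then show ?case using insert by simp
qed

lemma in_Lambda_eventually_zero: "in_Lambda x \<Longrightarrow> \<exists>N. \<forall>j\<ge>N. x j = 0"
proof -
  assume "in_Lambda x"
  then have "finite {j. x j \<noteq> 0}" by (simp add: in_Lambda_def)
  from finite_nat_bounded[OF this] obtain N where "\<forall>j\<in>{j. x j \<noteq> 0}. j < N" by auto
  then show ?thesis by (metis leD mem_Collect_eq)
qed

lemma finite_omega_support: "in_Lambda x \<Longrightarrow> finite {a. omega_coord x a \<noteq> 0}"
proof -
  assume x: "in_Lambda x"
  have "{a. omega_coord x a \<noteq> 0} \<subseteq> {j. x j \<noteq> 0} \<union> (\<lambda>j. j - 1) ` {j. x j \<noteq> 0}"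
  proof
    fix a assume "a \<in> {a. omega_coord x a \<noteq> 0}"
    then have "x a \<noteq> 0 \<or> x (Suc a) \<noteq> 0" by (auto simp: omega_coord_def)
    moreover have "a = (\<lambda>j. j - 1) (Suc a)" by simp
    ultimately show "a \<in> {j. x j \<noteq> 0} \<union> (\<lambda>j. j - 1) ` {j. x j \<noteq> 0}" by blast
  qed
  moreover have "finite ({j. x j \<noteq> 0} \<union> (\<lambda>j. j - 1) ` {j. x j \<noteq> 0})"
    using x by (simp add: in_Lambda_def)
  ultimately show ?thesis by (rule finite_subset)
qed

lemma
  assumes "finite {i. c i \<noteq> 0}"
  shows in_Lambda_from_omega: "in_Lambda (from_omega c)"
    and omega_coord_from_omega: "1 \<le> i \<Longrightarrow> omega_coord (from_omega c) i = c i"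
proof -
  obtain N where N: "\<forall>i\<in>{i. c i \<noteq> 0}. i < N" using finite_nat_bounded[OF assms] by auto
  have "from_omega c j = 0" if "N \<le> j" for j
  proof -
    have "{i. j \<le> i \<and> c i \<noteq> 0} = {}" using N that by force
    then show ?thesis by (simp add: from_omega_def)
  qed
  then have "{j. from_omega c j \<noteq> 0} \<subseteq> {..<N}" by (auto simp: not_less[symmetric])
  then show "in_Lambda (from_omega c)"
    unfolding in_Lambda_def by (simp add: from_omega_def finite_subset)
  assume "1 \<le> i"
  have fin: "finite {l. Suc i \<le> l \<and> c l \<noteq> 0}" by (rule finite_subset[OF _ assms]) auto
  show "omega_coord (from_omega c) i = c i"
  proof (cases "c i = 0")
    case True
    then have "{l. i \<le> l \<and> c l \<noteq> 0} = {l. Suc i \<le> l \<and> c l \<noteq> 0}"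
      using le_eq_less_or_eq by fastforce
    then show ?thesis using True \<open>1 \<le> i\<close> by (simp add: omega_coord_def from_omega_def)
  next
    case False
    then have "{l. i \<le> l \<and> c l \<noteq> 0} = insert i {l. Suc i \<le> l \<and> c l \<noteq> 0}"
      using le_eq_less_or_eq by fastforce
    then show ?thesis using False \<open>1 \<le> i\<close> fin by (simp add: omega_coord_def from_omega_def)
  qed
qed

lemma partitionI: "in_Lambda x \<Longrightarrow> (\<And>a. 1 \<le> a \<Longrightarrow> omega_coord x a \<ge> 0) \<Longrightarrow> is_partition x"
  by (simp add: is_partition_def)

lemma partition_mono:
  assumes "is_partition x" "1 \<le> i" "i \<le> j"
  shows "x j \<le> x i"
  using assms(3)
proof (induction j rule: dec_induct)
  case base then show ?case by simp
next
  case (step n)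
  then have "omega_coord x n \<ge> 0" using assms by (simp add: is_partition_def)
  then show ?case using step by (simp add: omega_coord_def)
qed

lemma partition_nonneg:
  assumes "is_partition x"
  shows "0 \<le> x j"
proof (cases "j = 0")
  case True then show ?thesis using assms by (simp add: is_partition_def in_Lambda_def)
next
  case False
  obtain N where "\<forall>j\<ge>N. x j = 0"
    using assms in_Lambda_eventually_zero unfolding is_partition_def by blast
  moreover have "x (max j N) \<le> x j" using partition_mono[OF assms] False by simp
  ultimately show ?thesis by simp
qed

lemma partition_add: "is_partition x \<Longrightarrow> is_partition y \<Longrightarrow> is_partition (\<lambda>j. x j + y j)"
  unfolding is_partition_def by (auto intro: in_Lambda_add add_mono simp: omega_coord_def)

lemma boxes_eq_sum:
  assumes "finite F" "{j. x j \<noteq> 0} \<subseteq> F"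
  shows "boxes x = nat (\<Sum>j\<in>F. x j)"
proof -
  have "(\<Sum>j\<in>{j. x j \<noteq> 0}. x j) = (\<Sum>j\<in>F. x j)"
    by (rule sum.mono_neutral_left) (use assms in auto)
  then show ?thesis by (simp add: boxes_def)
qed

lemma boxes_add:
  assumes "is_partition x" "is_partition y"
  shows "boxes (\<lambda>j. x j + y j) = boxes x + boxes y"
proof -
  let ?F = "{j. x j \<noteq> 0} \<union> {j. y j \<noteq> 0}"
  have F: "finite ?F" using assms by (simp add: is_partition_def in_Lambda_def)
  have "boxes (\<lambda>j. x j + y j) = nat (\<Sum>j\<in>?F. x j + y j)" by (rule boxes_eq_sum[OF F]) auto
  moreover have "boxes x = nat (\<Sum>j\<in>?F. x j)" by (rule boxes_eq_sum[OF F]) auto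
  moreover have "boxes y = nat (\<Sum>j\<in>?F. y j)" by (rule boxes_eq_sum[OF F]) auto
  moreover have "(\<Sum>j\<in>?F. x j) \<ge> 0" "(\<Sum>j\<in>?F. y j) \<ge> 0"
    using partition_nonneg assms by (auto intro: sum_nonneg)
  ultimately show ?thesis by (simp add: sum.distrib nat_add_distrib)
qed

lemma entry_le_boxes:
  assumes "is_partition x"
  shows "x j \<le> int (boxes x)"
proof -
  let ?F = "insert j {j. x j \<noteq> 0}"
  have F: "finite ?F" using assms by (simp add: is_partition_def in_Lambda_def)
  have "x j \<le> (\<Sum>l\<in>?F. x l)"
    by (rule member_le_sum) (use partition_nonneg[OF assms] F in auto)
  moreover have "boxes x = nat (\<Sum>l\<in>?F. x l)" by (rule boxes_eq_sum[OF F]) auto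
  ultimately show ?thesis by linarith
qed

lemma index_le_boxes:
  assumes "is_partition x" "1 \<le> v" "1 \<le> x v"
  shows "v \<le> boxes x"
proof -
  let ?F = "{1..v} \<union> {j. x j \<noteq> 0}"
  have F: "finite ?F" using assms by (simp add: is_partition_def in_Lambda_def)
  have "(\<Sum>l\<in>{1..v}. x l) \<le> (\<Sum>l\<in>?F. x l)"
    by (rule sum_mono2) (use partition_nonneg[OF assms(1)] F in auto)
  moreover have "(\<Sum>l\<in>{1..v}. (1::int)) \<le> (\<Sum>l\<in>{1..v}. x l)"
    by (rule sum_mono) (use partition_mono[OF assms(1)] assms in force)
  moreover have "boxes x = nat (\<Sum>l\<in>?F. x l)" by (rule boxes_eq_sum[OF F]) auto
  ultimately show ?thesis by simp
qed

lemma finite_partitions_boxes_le: "finite {\<delta>. is_partition \<delta> \<and> boxes \<delta> \<le> n}"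
proof (rule finite_subset)
  show "{\<delta>. is_partition \<delta> \<and> boxes \<delta> \<le> n} \<subseteq>
      {f. \<forall>j. (j \<in> {..n} \<longrightarrow> f j \<in> {0..int n}) \<and> (j \<notin> {..n} \<longrightarrow> f j = 0)}"
  proof (clarify, intro conjI impI)
    fix \<delta> j assume p: "is_partition \<delta>" and b: "boxes \<delta> \<le> n"
    show "\<delta> j \<in> {0..int n}" using partition_nonneg[OF p] entry_le_boxes[OF p, of j] b by auto
    assume "j \<notin> {..n}"
    show "\<delta> j = 0"
    proof (rule ccontr)
      assume "\<delta> j \<noteq> 0"
      moreover have "\<delta> 0 = 0" using p by (simp add: is_partition_def in_Lambda_def)
      ultimately have "1 \<le> \<delta> j" "j \<noteq> 0" using partition_nonneg[OF p, of j] by (auto intro: gr0I)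
      then have "j \<le> boxes \<delta>" using index_le_boxes[OF p] by simp
      then show False using b \<open>j \<notin> {..n}\<close> by simp
    qed
  qed
qed (rule finite_set_of_finite_funs; simp)

lemma finite_partitions_scaled_boxes: "0 < k \<Longrightarrow> finite {\<delta>. is_partition \<delta> \<and> k * boxes \<delta> = a}"
  by (rule finite_subset[OF _ finite_partitions_boxes_le[of a]]) auto

section \<open>Semistandard tableaux\<close>

lemma finite_cells: assumes "is_partition \<nu>" shows "finite (cells \<nu>)"
proof -
  have "cells \<nu> \<subseteq> Sigma {r. \<nu> r \<noteq> 0} (\<lambda>r. {..nat (\<nu> r)})"
    unfolding cells_def by auto
  moreover have "finite (Sigma {r. \<nu> r \<noteq> 0} (\<lambda>r. {..nat (\<nu> r)}))"
    using assms by (simp add: is_partition_def in_Lambda_def)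
  ultimately show ?thesis using finite_subset by blast
qed

lemma SST_outside_cells: "T \<in> SST \<nu> \<Longrightarrow> p \<notin> cells \<nu> \<Longrightarrow> T p = 0"
  unfolding SST_def by blast

lemma SST_level_subset_cells: "T \<in> SST \<nu> \<Longrightarrow> 1 \<le> j \<Longrightarrow> {p. T p = j} \<subseteq> cells \<nu>"
  using SST_outside_cells by fastforce

lemma in_Lambda_wt_tab: assumes "is_partition \<nu>" "T \<in> SST \<nu>" shows "in_Lambda (wt_tab T)"
proof -
  have "{j. wt_tab T j \<noteq> 0} \<subseteq> T ` cells \<nu>"
  proof
    fix j assume "j \<in> {j. wt_tab T j \<noteq> 0}"
    then have j: "j \<noteq> 0" "card {p. T p = j} \<noteq> 0" by (auto simp: wt_tab_def split: if_splits)
    then have "{p. T p = j} \<noteq> {}" by (metis card.empty)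
    then obtain p where "T p = j" by blast
    moreover have "p \<in> cells \<nu>" using SST_outside_cells[OF assms(2)] j \<open>T p = j\<close> by fastforce
    ultimately show "j \<in> T ` cells \<nu>" by blast
  qed
  then have "finite {j. wt_tab T j \<noteq> 0}"
    using finite_cells[OF assms(1)] finite_subset by blast
  moreover have "wt_tab T 0 = 0" by (simp add: wt_tab_def)
  ultimately show ?thesis by (simp add: in_Lambda_def)
qed

lemma row_le_nrows: assumes "is_partition \<nu>" "1 \<le> r" "1 \<le> \<nu> r" shows "r \<le> nrows \<nu>"
proof -
  have "{1..r} \<subseteq> {j. \<nu> j \<noteq> 0}" using partition_mono[OF assms(1)] assms by force
  then have "card {1..r} \<le> card {j. \<nu> j \<noteq> 0}"
    using assms(1) by (intro card_mono) (auto simp: is_partition_def in_Lambda_def)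
  then show ?thesis by (simp add: nrows_def)
qed

lemma set_read_cells: assumes "is_partition \<nu>" shows "set (read_cells \<nu>) = cells \<nu>"
proof
  show "set (read_cells \<nu>) \<subseteq> cells \<nu>" unfolding read_cells_def cells_def by auto
  show "cells \<nu> \<subseteq> set (read_cells \<nu>)"
  proof
    fix p assume "p \<in> cells \<nu>"
    then obtain r c where p: "p = (r, c)" "1 \<le> r" "1 \<le> c" "int c \<le> \<nu> r" by (auto simp: cells_def)
    then have "r \<le> nrows \<nu>" using row_le_nrows[OF assms] by simp
    then show "p \<in> set (read_cells \<nu>)" using p unfolding read_cells_def by force
  qed
qed

lemma distinct_concat_map_rows:
  "distinct rs \<Longrightarrow> distinct (concat (map (\<lambda>r. map (\<lambda>c. (r, c)) (g r)) rs))"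
  if "\<And>r. distinct (g r)"
  using that by (induction rs) (auto simp: distinct_map inj_on_def)

lemma distinct_read_cells: "distinct (read_cells \<nu>)"
  unfolding read_cells_def by (rule distinct_concat_map_rows) auto

lemma finite_SST_entries_le:
  assumes "is_partition \<nu>"
  shows "finite {T \<in> SST \<nu>. \<forall>p. T p \<le> n}"
proof (rule finite_subset)
  show "{T \<in> SST \<nu>. \<forall>p. T p \<le> n} \<subseteq>
      {f. \<forall>p. (p \<in> cells \<nu> \<longrightarrow> f p \<in> {..n}) \<and> (p \<notin> cells \<nu> \<longrightarrow> f p = 0)}"
    using SST_outside_cells by auto
qed (rule finite_set_of_finite_funs; use finite_cells[OF assms] in simp)

lemma wt_tab_pos:
  assumes "is_partition \<nu>" "T \<in> SST \<nu>" "T p = x" "1 \<le> x"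
  shows "1 \<le> wt_tab T x"
proof -
  have "finite {q. T q = x}" using SST_level_subset_cells[OF assms(2,4)] finite_cells[OF assms(1)] finite_subset by blast
  moreover have "{q. T q = x} \<noteq> {}" using assms(3) by blast
  ultimately have "card {q. T q = x} > 0" by (simp add: card_gt_0_iff)
  then show ?thesis using assms(4) by (simp add: wt_tab_def)
qed

section \<open>The signature rule\<close>

lemma sig_stack_append: "sig_stack i st (u @ v) = sig_stack i (sig_stack i st u) v"
  by (induction u arbitrary: st) auto

lemma length_sig_stack_cong: "length s = length t \<Longrightarrow> length (sig_stack i s v) = length (sig_stack i t v)"
proof (induction v arbitrary: s t)
  case Nil then show ?case by simp
next
  case (Cons a v)
  obtain q y where a: "a = (q, y)" by (cases a)
  have 1: "length (sig_stack i (q#s) v) = length (sig_stack i (q#t) v)"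
    using Cons.IH[of "q#s" "q#t"] Cons.prems by simp
  have 2: "length (sig_stack i (drop 1 s) v) = length (sig_stack i (drop 1 t) v)"
    using Cons.IH[of "drop 1 s" "drop 1 t"] Cons.prems by simp
  have 3: "length (sig_stack i s v) = length (sig_stack i t v)"
    using Cons.IH[of s t] Cons.prems by simp
  show ?case using 1 2 3 a by (simp del: sig_stack.simps add: sig_stack.simps(2))
qed

lemma length_sig_stack_Cons_le: "length (sig_stack i (x # s) v) \<le> Suc (length (sig_stack i s v))"
proof (induction v arbitrary: x s)
  case Nil then show ?case by simp
next
  case (Cons a v)
  obtain q y where a: "a = (q, y)" by (cases a)
  show ?case
  proof (cases "y = Suc i")
    case True
    have "length (sig_stack i (q # x # s) v) = length (sig_stack i (x # q # s) v)"
      by (rule length_sig_stack_cong) simp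
    then show ?thesis using True a Cons.IH[of x "q # s"] by simp
  next
    case False
    show ?thesis
    proof (cases "y = i")
      case True
      show ?thesis
      proof (cases s)
        case Nil then show ?thesis using True False a by simp
      next
        case (Cons z s')
        then show ?thesis using True False a Cons.IH[of z s'] by simp
      qed
    next
      case False2: False
      then show ?thesis using False a Cons.IH[of x s] by simp
    qed
  qed
qed

lemma sig_stack_shape: "\<exists>pre j. sig_stack i s v = pre @ drop j s \<and> set pre \<subseteq> {q. (q, Suc i) \<in> set v}"
proof (induction v arbitrary: s)
  case Nil then show ?case by (intro exI[of _ "[]"] exI[of _ 0]) simp
next
  case (Cons a w)
  obtain p x where a: "a = (p, x)" by (cases a)
  show ?case
  proof (cases "x = Suc i")
    case True
    obtain pre j where pre: "sig_stack i (p # s) w = pre @ drop j (p # s)"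
      "set pre \<subseteq> {q. (q, Suc i) \<in> set w}" using Cons.IH[of "p # s"] by blast
    have e: "sig_stack i s (a # w) = sig_stack i (p # s) w" using a True by simp
    show ?thesis
    proof (cases j)
      case 0
      then show ?thesis using True pre e a by (intro exI[of _ "pre @ [p]"] exI[of _ 0]) auto
    next
      case (Suc j')
      then show ?thesis using True pre e a by (intro exI[of _ "pre"] exI[of _ j']) auto
    qed
  next
    case False
    show ?thesis
    proof (cases "x = i")
      case True
      obtain pre j where pre: "sig_stack i (drop 1 s) w = pre @ drop j (drop 1 s)"
        "set pre \<subseteq> {q. (q, Suc i) \<in> set w}" using Cons.IH[of "drop 1 s"] by blast
      have e: "sig_stack i s (a # w) = sig_stack i (drop 1 s) w" using a True False by simp
      show ?thesis using pre e by (intro exI[of _ pre] exI[of _ "Suc j"]) auto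
    next
      case False2: False
      obtain pre j where pre: "sig_stack i s w = pre @ drop j s"
        "set pre \<subseteq> {q. (q, Suc i) \<in> set w}" using Cons.IH[of s] by blast
      have e: "sig_stack i s (a # w) = sig_stack i s w" using a False2 False by simp
      show ?thesis using pre e by (intro exI[of _ pre] exI[of _ j]) auto
    qed
  qed
qed

lemma set_sig_stack_subset: "set (sig_stack i [] v) \<subseteq> {q. (q, Suc i) \<in> set v}"
  using sig_stack_shape[of i "[]" v] by auto

definition letter_count :: "nat \<Rightarrow> ('p \<times> nat) list \<Rightarrow> nat" where
  "letter_count x w = length (filter (\<lambda>(q, y). y = x) w)"

lemma length_sig_stack_ge:
  "int (length (sig_stack i s v)) \<ge> int (length s) + int (letter_count (Suc i) v) - int (letter_count i v)"
proof (induction v arbitrary: s)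
  case Nil then show ?case by (simp add: letter_count_def)
next
  case (Cons a w)
  obtain p x where a: "a = (p, x)" by (cases a)
  show ?case
  proof (cases "x = Suc i")
    case True
    then show ?thesis using Cons.IH[of "p # s"] a by (simp add: letter_count_def)
  next
    case False
    show ?thesis
    proof (cases "x = i")
      case True
      then show ?thesis using Cons.IH[of "drop 1 s"] a False by (simp add: letter_count_def)
    next
      case False2: False
      then show ?thesis using Cons.IH[of s] a False by (simp add: letter_count_def)
    qed
  qed
qed

text \<open>Lowering the leftmost uncancelled letter \<open>i + 1\<close> to \<open>i\<close> leaves all earlier
  cancellations intact and can cancel at most one later letter, so the signature shrinks by at most one.\<close>

lemma length_sig_stack_lower_letter:
  assumes w: "w = u @ (p, Suc i) # v" and pu: "p \<notin> fst ` set u" and pv: "p \<notin> fst ` set v"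
    and ne: "sig_stack i [] w \<noteq> []" and l: "last (sig_stack i [] w) = p"
  shows "length (sig_stack i [] w) \<le> Suc (length (sig_stack i [] (u @ (p, i) # v)))"
proof -
  define s0 where "s0 = sig_stack i [] u"
  have st: "sig_stack i [] w = sig_stack i (p # s0) v" using w by (simp add: sig_stack_append s0_def)
  have s0set: "set s0 \<subseteq> fst ` set u" using set_sig_stack_subset[of i u] unfolding s0_def by force
  obtain pre j where pre: "sig_stack i (p # s0) v = pre @ drop j (p # s0)"
    "set pre \<subseteq> {q. (q, Suc i) \<in> set v}" using sig_stack_shape[of i "p # s0" v] by blast
  have preset: "set pre \<subseteq> fst ` set v" using pre(2) by force
  have s0e: "s0 = []"
  proof (rule ccontr)
    assume "s0 \<noteq> []"
    show False
    proof (cases "drop j (p # s0) = []")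
      case True
      then have "last pre = p" "pre \<noteq> []" using l ne st pre(1) by auto
      then have "p \<in> set pre" by auto
      then show False using preset pv by auto
    next
      case False
      then have "last (sig_stack i [] w) = last (drop j (p # s0))" using st pre(1) by simp
      also have "\<dots> = last (p # s0)" using False by (simp add: last_drop)
      also have "\<dots> = last s0" using \<open>s0 \<noteq> []\<close> by simp
      finally have "p \<in> set s0" using l \<open>s0 \<noteq> []\<close> by auto
      then show False using s0set pu by auto
    qed
  qed
  have "sig_stack i [] (u @ (p, i) # v) = sig_stack i [] v"
    using s0e by (simp add: sig_stack_append s0_def[symmetric])
  moreover have "sig_stack i [] w = sig_stack i [p] v" using st s0e by simp
  ultimately show ?thesis using length_sig_stack_Cons_le[of i p "[]" v] by simp
qed

section \<open>Kashiwara operators and \<open>\<epsilon>\<close>\<close>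

definition reading_word :: "lwt \<Rightarrow> tab \<Rightarrow> ((nat \<times> nat) \<times> nat) list" where
  "reading_word \<nu> T = map (\<lambda>p. (p, T p)) (read_cells \<nu>)"

lemma e_pow_Suc_left: "e_pow \<nu> i (Suc m) T = (case e_tab \<nu> i T of None \<Rightarrow> None | Some T' \<Rightarrow> e_pow \<nu> i m T')"
proof (induction m arbitrary: T)
  case 0 then show ?case by (cases "e_tab \<nu> i T") auto
next
  case (Suc m)
  have "e_pow \<nu> i (Suc (Suc m)) T = (case e_pow \<nu> i (Suc m) T of None \<Rightarrow> None | Some T' \<Rightarrow> e_tab \<nu> i T')"
    by simp
  also have "\<dots> = (case e_tab \<nu> i T of None \<Rightarrow> None | Some T' \<Rightarrow> e_pow \<nu> i (Suc m) T')"
    using Suc by (cases "e_tab \<nu> i T") auto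
  finally show ?case .
qed

lemma e_tab_reading_word: "e_tab \<nu> i T = (let st = sig_stack i [] (reading_word \<nu> T) in if st = [] then None else Some (T(last st := i)))"
  by (simp add: e_tab_def reading_word_def)

lemma e_tab_SomeD:
  assumes "e_tab \<nu> i T = Some T'"
  shows "sig_stack i [] (reading_word \<nu> T) \<noteq> [] \<and> last (sig_stack i [] (reading_word \<nu> T)) \<in> set (read_cells \<nu>)
     \<and> T (last (sig_stack i [] (reading_word \<nu> T))) = Suc i \<and> T' = T(last (sig_stack i [] (reading_word \<nu> T)) := i)"
proof -
  let ?st = "sig_stack i [] (reading_word \<nu> T)"
  have ne: "?st \<noteq> []" and T': "T' = T(last ?st := i)"
    using assms by (auto simp: e_tab_def reading_word_def Let_def split: if_splits)
  have "last ?st \<in> set ?st" using ne by simp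
  then have "(last ?st, Suc i) \<in> set (reading_word \<nu> T)" using set_sig_stack_subset[of i "reading_word \<nu> T"] by blast
  then show ?thesis using ne T' by (auto simp: reading_word_def)
qed

lemma letter_count_reading_word: "letter_count x (reading_word \<nu> T) = card ({q. T q = x} \<inter> set (read_cells \<nu>))"
proof -
  have "letter_count x (reading_word \<nu> T) = length (filter (\<lambda>q. T q = x) (read_cells \<nu>))"
    by (simp add: letter_count_def reading_word_def filter_map o_def)
  then show ?thesis using distinct_read_cells by (simp add: distinct_length_filter)
qed

lemma letter_count_lower:
  assumes "p \<in> set (read_cells \<nu>)" "T p = Suc i"
  shows "letter_count (Suc i) (reading_word \<nu> (T(p := i))) = letter_count (Suc i) (reading_word \<nu> T) - 1"
proof -
  have "{q. (T(p := i)) q = Suc i} \<inter> set (read_cells \<nu>) = ({q. T q = Suc i} \<inter> set (read_cells \<nu>)) - {p}"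
    by auto
  then show ?thesis using assms by (simp add: letter_count_reading_word)
qed

text \<open>This bound makes the \<open>GREATEST\<close> in \<open>eps_i\<close> meaningful.\<close>

lemma e_pow_le_letter_count: "e_pow \<nu> i m T \<noteq> None \<Longrightarrow> m \<le> letter_count (Suc i) (reading_word \<nu> T)"
proof (induction m arbitrary: T)
  case 0 then show ?case by simp
next
  case (Suc m)
  then obtain T' where T': "e_tab \<nu> i T = Some T'" "e_pow \<nu> i m T' \<noteq> None"
    by (cases "e_tab \<nu> i T") (auto simp: e_pow_Suc_left simp del: e_pow.simps)
  let ?p = "last (sig_stack i [] (reading_word \<nu> T))"
  have p: "?p \<in> set (read_cells \<nu>)" "T ?p = Suc i" "T' = T(?p := i)" using e_tab_SomeD[OF T'(1)] by auto
  have "m \<le> letter_count (Suc i) (reading_word \<nu> T')" using Suc.IH T'(2) by blast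
  moreover have "letter_count (Suc i) (reading_word \<nu> T') = letter_count (Suc i) (reading_word \<nu> T) - 1"
    using p letter_count_lower by simp
  moreover have "letter_count (Suc i) (reading_word \<nu> T) \<ge> 1"
  proof -
    have "?p \<in> {q. T q = Suc i} \<inter> set (read_cells \<nu>)" using p by simp
    then have "{q. T q = Suc i} \<inter> set (read_cells \<nu>) \<noteq> {}" by blast
    then show ?thesis by (simp add: letter_count_reading_word Suc_le_eq card_gt_0_iff)
  qed
  ultimately show ?case by linarith
qed

lemma e_pow_if_le_signature: "m \<le> length (sig_stack i [] (reading_word \<nu> T)) \<Longrightarrow> e_pow \<nu> i m T \<noteq> None"
proof (induction m arbitrary: T)
  case 0 then show ?case by simp
next
  case (Suc m)
  define st where "st = sig_stack i [] (reading_word \<nu> T)"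
  define p where "p = last st"
  have ne: "st \<noteq> []" using Suc.prems by (auto simp: st_def)
  have "p \<in> set st" using ne by (simp add: p_def)
  then have "(p, Suc i) \<in> set (reading_word \<nu> T)" using set_sig_stack_subset[of i "reading_word \<nu> T"] by (auto simp: st_def)
  then have pin: "p \<in> set (read_cells \<nu>)" and Tp: "T p = Suc i" by (auto simp: reading_word_def)
  obtain ru rv where rc: "read_cells \<nu> = ru @ p # rv" using split_list[OF pin] by blast
  have dist: "p \<notin> set ru" "p \<notin> set rv" using distinct_read_cells[of \<nu>] rc by auto
  define T' where "T' = T(p := i)"
  have eT: "e_tab \<nu> i T = Some T'" using ne
    by (simp add: e_tab_reading_word T'_def Let_def st_def[symmetric] p_def[symmetric])
  have w: "reading_word \<nu> T = map (\<lambda>q. (q, T q)) ru @ (p, Suc i) # map (\<lambda>q. (q, T q)) rv"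
    using Tp by (simp add: reading_word_def rc)
  have m1: "map (\<lambda>q. (q, T' q)) ru = map (\<lambda>q. (q, T q)) ru"
    using dist(1) by (auto simp: T'_def)
  have m2: "map (\<lambda>q. (q, T' q)) rv = map (\<lambda>q. (q, T q)) rv"
    using dist(2) by (auto simp: T'_def)
  have w': "reading_word \<nu> T' = map (\<lambda>q. (q, T q)) ru @ (p, i) # map (\<lambda>q. (q, T q)) rv"
    using m1 m2 by (simp add: reading_word_def rc T'_def)
  have "length st \<le> Suc (length (sig_stack i [] (reading_word \<nu> T')))"
    unfolding w' st_def by (rule length_sig_stack_lower_letter[OF w]) (use dist ne in \<open>force simp: st_def p_def\<close>)+
  then have "m \<le> length (sig_stack i [] (reading_word \<nu> T'))" using Suc.prems by (simp add: st_def)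
  then have "e_pow \<nu> i m T' \<noteq> None" using Suc.IH by blast
  then show ?case using eT by (simp add: e_pow_Suc_left del: e_pow.simps)
qed

lemma eps_i_le_letter_count: "eps_i \<nu> i T \<le> letter_count (Suc i) (reading_word \<nu> T)"
proof -
  have "e_pow \<nu> i 0 T \<noteq> None" by simp
  then show ?thesis unfolding eps_i_def by (rule e_pow_le_letter_count[OF GreatestI_nat[OF _ e_pow_le_letter_count]])
qed

lemma signature_le_eps_i: "length (sig_stack i [] (reading_word \<nu> T)) \<le> eps_i \<nu> i T"
proof -
  have "e_pow \<nu> i (length (sig_stack i [] (reading_word \<nu> T))) T \<noteq> None" by (rule e_pow_if_le_signature) simp
  then show ?thesis unfolding eps_i_def by (rule Greatest_le_nat[OF _ e_pow_le_letter_count])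
qed

lemma letter_count_eq_wt_tab:
  assumes "is_partition \<nu>" "T \<in> SST \<nu>" "1 \<le> x"
  shows "int (letter_count x (reading_word \<nu> T)) = wt_tab T x"
proof -
  have "{q. T q = x} \<inter> set (read_cells \<nu>) = {q. T q = x}"
    using SST_level_subset_cells[OF assms(2,3)] set_read_cells[OF assms(1)] by blast
  then show ?thesis using assms(3) by (simp add: letter_count_reading_word wt_tab_def)
qed

lemma
  assumes "is_partition \<nu>" "T \<in> SST \<nu>"
  shows in_Lambda_eps_vec: "in_Lambda (eps_vec \<nu> T)"
    and omega_coord_eps_vec: "1 \<le> a \<Longrightarrow> omega_coord (eps_vec \<nu> T) a = int (eps_i \<nu> a T)"
proof -
  define c where "c = (\<lambda>i. if i = 0 then 0 else int (eps_i \<nu> i T))"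
  have "{i. c i \<noteq> 0} \<subseteq> (\<lambda>j. j - 1) ` {j. wt_tab T j \<noteq> 0}"
  proof
    fix i assume "i \<in> {i. c i \<noteq> 0}"
    then have "i \<noteq> 0" "eps_i \<nu> i T \<noteq> 0" by (auto simp: c_def split: if_splits)
    then have "letter_count (Suc i) (reading_word \<nu> T) \<noteq> 0"
      using eps_i_le_letter_count[of \<nu> i T] by linarith
    then have "wt_tab T (Suc i) \<noteq> 0" using letter_count_eq_wt_tab[OF assms, of "Suc i"] by simp
    then show "i \<in> (\<lambda>j. j - 1) ` {j. wt_tab T j \<noteq> 0}" by force
  qed
  then have fin: "finite {i. c i \<noteq> 0}"
    using in_Lambda_wt_tab[OF assms] finite_subset by (fastforce simp: in_Lambda_def)
  have "eps_vec \<nu> T = from_omega c" by (simp add: eps_vec_def c_def)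
  then show "in_Lambda (eps_vec \<nu> T)" "1 \<le> a \<Longrightarrow> omega_coord (eps_vec \<nu> T) a = int (eps_i \<nu> a T)"
    using in_Lambda_from_omega[OF fin] omega_coord_from_omega[OF fin] by (simp_all add: c_def)
qed

text \<open>The signature rule cancels each letter \<open>a\<close> against at most one letter \<open>a + 1\<close>.\<close>

lemma wt_tab_Suc_le_eps_i:
  assumes "is_partition \<nu>" "T \<in> SST \<nu>" "1 \<le> a"
  shows "wt_tab T (Suc a) - wt_tab T a \<le> int (eps_i \<nu> a T)"
proof -
  have "int (letter_count (Suc a) (reading_word \<nu> T)) - int (letter_count a (reading_word \<nu> T))
      \<le> int (length (sig_stack a [] (reading_word \<nu> T)))"
    using length_sig_stack_ge[where i=a and s="[]" and v="reading_word \<nu> T"] by simp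
  also have "\<dots> \<le> int (eps_i \<nu> a T)" using signature_le_eps_i by simp
  finally show ?thesis
    using letter_count_eq_wt_tab[OF assms(1,2)] assms(3) by simp
qed

lemma omega_coord_eps_vec_wt_tab_nonneg:
  "is_partition \<nu> \<Longrightarrow> T \<in> SST \<nu> \<Longrightarrow> 1 \<le> a
    \<Longrightarrow> 0 \<le> omega_coord (eps_vec \<nu> T) a + omega_coord (wt_tab T) a"
  using omega_coord_eps_vec wt_tab_Suc_le_eps_i by (fastforce simp: omega_coord_def)

section \<open>Distinguished tableaux and \<open>\<lambda>(T)\<close>\<close>

lemma cumwt_Suc: "1 \<le> i \<Longrightarrow> cumwt Tp Tm (Suc i) j = cumwt Tp Tm i j + (wt_tab (Tp (Suc i)) j - wt_tab (Tm (Suc i)) j)"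
proof -
  assume "1 \<le> i"
  then have "{2..Suc i} = insert (Suc i) {2..i}" by auto
  then show ?thesis by (simp add: cumwt_def add.commute)
qed

lemma prev_in_range: "1 \<le> k \<Longrightarrow> i \<in> {1..k} \<Longrightarrow> prev k i \<in> {1..k}"
  by (auto simp: prev_def)

context
  fixes k :: nat and nup num :: "nat \<Rightarrow> lwt"
  assumes k: "1 \<le> k" and parts: "\<forall>i\<in>{1..k}. is_partition (nup i) \<and> is_partition (num i)"
begin

definition tab_tuple :: "(nat \<Rightarrow> tab) \<Rightarrow> (nat \<Rightarrow> tab) \<Rightarrow> bool" where
  "tab_tuple Tp Tm \<longleftrightarrow> (\<forall>i\<in>{1..k}. Tp i \<in> SST (nup i) \<and> Tm i \<in> SST (num i))
     \<and> (\<forall>i. i \<notin> {1..k} \<longrightarrow> Tp i = (\<lambda>_. 0) \<and> Tm i = (\<lambda>_. 0))"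

definition CLR_tuple :: "(nat \<Rightarrow> tab) \<Rightarrow> (nat \<Rightarrow> tab) \<Rightarrow> (nat \<Rightarrow> lwt) \<Rightarrow> (nat \<Rightarrow> lwt) \<Rightarrow> bool" where
  "CLR_tuple Tp Tm lam \<alpha> \<longleftrightarrow> is_ptuple k lam \<and> is_ptuple k \<alpha> \<and>
     (\<forall>i\<in>{1..k}. Tp i \<in> CLR (lam i) (\<alpha> i) (nup i) \<and> Tm i \<in> CLR (lam (prev k i)) (\<alpha> i) (num i))"

lemma Dtab_iff: "(Tp, Tm) \<in> Dtab k nup num \<longleftrightarrow> tab_tuple Tp Tm \<and> (\<exists>lam \<alpha>. CLR_tuple Tp Tm lam \<alpha>)"
  by (simp add: Dtab_def tab_tuple_def CLR_tuple_def)

lemma CLR_tuple_tab_tuple: "CLR_tuple Tp Tm lam \<alpha> \<Longrightarrow> (\<forall>i. i \<notin> {1..k} \<longrightarrow> Tp i = (\<lambda>_. 0) \<and> Tm i = (\<lambda>_. 0)) \<Longrightarrow> tab_tuple Tp Tm"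
  by (auto simp: CLR_tuple_def tab_tuple_def CLR_def)

text \<open>\<open>T\<^sub>i\<^sup>+\<close> and \<open>T\<^sub>i\<^sup>-\<close> share \<open>\<alpha>\<^sub>i\<close>, so \<open>\<lambda>\<^sub>i - \<lambda>\<^sub>i\<^sub>-\<^sub>1 = wt(T\<^sub>i)\<close>.\<close>

lemma CLR_tuple_lam_eq:
  assumes "CLR_tuple Tp Tm lam \<alpha>" "i \<in> {1..k}"
  shows "lam i j = lam 1 j + cumwt Tp Tm i j"
  using assms(2)
proof (induction i)
  case 0 then show ?case by simp
next
  case (Suc i)
  show ?case
  proof (cases "i = 0")
    case True then show ?thesis by (simp add: cumwt_def)
  next
    case False
    then have i: "i \<in> {1..k}" "Suc i \<in> {1..k}" "prev k (Suc i) = i" using Suc.prems by (auto simp: prev_def)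
    have "\<alpha> (Suc i) j + wt_tab (Tm (Suc i)) j = lam i j"
      using assms(1) i by (auto simp: CLR_tuple_def CLR_def)
    moreover have "\<alpha> (Suc i) j + wt_tab (Tp (Suc i)) j = lam (Suc i) j"
      using assms(1) i by (auto simp: CLR_tuple_def CLR_def)
    ultimately show ?thesis using Suc.IH[OF i(1)] cumwt_Suc[of i Tp Tm j] False by simp
  qed
qed

lemma CLR_tuple_alpha_eq:
  assumes "CLR_tuple Tp Tm lam \<alpha>" "i \<in> {1..k}"
  shows "\<alpha> i j = lam i j - wt_tab (Tp i) j"
proof -
  have "\<forall>j. \<alpha> i j + wt_tab (Tp i) j = lam i j" using assms by (auto simp: CLR_tuple_def CLR_def)
  then have "\<alpha> i j + wt_tab (Tp i) j = lam i j" by blast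
  then show ?thesis by simp
qed

text \<open>The cyclic condition at \<open>i = 1\<close>, where \<open>\<lambda>\<^sub>0 = \<lambda>\<^sub>k\<close>, closes the chain.\<close>

lemma CLR_tuple_cumwt_total:
  assumes "CLR_tuple Tp Tm lam \<alpha>"
  shows "cumwt Tp Tm k j = wt_tab (Tm 1) j - wt_tab (Tp 1) j"
proof -
  have 1: "1 \<in> {1..k}" "k \<in> {1..k}" "prev k 1 = k" using k by (auto simp: prev_def)
  have "\<alpha> 1 j + wt_tab (Tm 1) j = lam k j" using assms 1 by (auto simp: CLR_tuple_def CLR_def)
  moreover have "\<alpha> 1 j + wt_tab (Tp 1) j = lam 1 j" using assms 1 by (auto simp: CLR_tuple_def CLR_def)
  moreover have "lam k j = lam 1 j + cumwt Tp Tm k j" using CLR_tuple_lam_eq[OF assms 1(2)] .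
  ultimately show ?thesis by simp
qed

lemma CLR_tuple_omega_le:
  assumes "CLR_tuple Tp Tm lam \<alpha>" "i \<in> {1..k}" "1 \<le> a"
  shows "omega_coord (S_plus nup Tp Tm i) a \<le> omega_coord (lam 1) a"
    and "omega_coord (S_minus num Tp Tm i) a \<le> omega_coord (lam 1) a"
proof -
  have d1: "dom_le (eps_vec (nup i) (Tp i)) (\<alpha> i)" and d2: "dom_le (eps_vec (num i) (Tm i)) (\<alpha> i)"
    using assms by (auto simp: CLR_tuple_def CLR_def)
  have al: "\<alpha> i j = lam 1 j + cumwt Tp Tm i j - wt_tab (Tp i) j" for j
    using CLR_tuple_alpha_eq[OF assms(1,2)] CLR_tuple_lam_eq[OF assms(1,2)] by simp
  show "omega_coord (S_plus nup Tp Tm i) a \<le> omega_coord (lam 1) a"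
    using d1 assms(3) unfolding dom_le_def by (auto simp: omega_coord_def S_plus_def al)
  show "omega_coord (S_minus num Tp Tm i) a \<le> omega_coord (lam 1) a"
    using d2 assms(3) unfolding dom_le_def by (auto simp: omega_coord_def S_minus_def al)
qed

lemma tab_tupleD: "tab_tuple Tp Tm \<Longrightarrow> i \<in> {1..k} \<Longrightarrow> Tp i \<in> SST (nup i) \<and> Tm i \<in> SST (num i)
   \<and> is_partition (nup i) \<and> is_partition (num i)"
  using parts by (auto simp: tab_tuple_def)

lemma in_Lambda_cumwt: assumes "tab_tuple Tp Tm" "i \<le> k" shows "in_Lambda (cumwt Tp Tm i)"
  unfolding cumwt_def
proof (rule in_Lambda_sum)
  fix l assume "l \<in> {2..i}"
  then have "l \<in> {1..k}" using assms by auto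
  note b = tab_tupleD[OF assms(1) this]
  show "in_Lambda (\<lambda>j. wt_tab (Tp l) j - wt_tab (Tm l) j)"
    using b in_Lambda_wt_tab[of "nup l" "Tp l"] in_Lambda_wt_tab[of "num l" "Tm l"] by (intro in_Lambda_diff) auto
qed simp

lemma in_Lambda_S:
  assumes "tab_tuple Tp Tm" "i \<in> {1..k}"
  shows "in_Lambda (S_plus nup Tp Tm i)" "in_Lambda (S_minus num Tp Tm i)"
proof -
  note b = tab_tupleD[OF assms]
  have c: "in_Lambda (cumwt Tp Tm i)" using in_Lambda_cumwt assms by auto
  have w: "in_Lambda (wt_tab (Tp i))" using b in_Lambda_wt_tab by blast
  have e1: "in_Lambda (eps_vec (nup i) (Tp i))" using b in_Lambda_eps_vec by blast
  have e2: "in_Lambda (eps_vec (num i) (Tm i))" using b in_Lambda_eps_vec by blast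
  show "in_Lambda (S_plus nup Tp Tm i)" unfolding S_plus_def
    by (intro in_Lambda_diff in_Lambda_add e1 w c)
  show "in_Lambda (S_minus num Tp Tm i)" unfolding S_minus_def
    by (intro in_Lambda_diff in_Lambda_add e2 w c)
qed

definition S_coords :: "(nat \<Rightarrow> tab) \<Rightarrow> (nat \<Rightarrow> tab) \<Rightarrow> nat \<Rightarrow> int set" where
  "S_coords Tp Tm a = (\<lambda>i. omega_coord (S_plus nup Tp Tm i) a) ` {1..k}
          \<union> (\<lambda>i. omega_coord (S_minus num Tp Tm i) a) ` {1..k}"

lemma S_coords_finite: "finite (S_coords Tp Tm a)" "S_coords Tp Tm a \<noteq> {}"
  using k by (auto simp: S_coords_def)

lemma lam_min_eq: "lam_min k nup num Tp Tm = from_omega (\<lambda>a. Max (S_coords Tp Tm a))"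
  by (simp add: lam_min_def S_coords_def)

lemma
  assumes "tab_tuple Tp Tm"
  shows in_Lambda_lam_min: "in_Lambda (lam_min k nup num Tp Tm)"
    and omega_coord_lam_min:
      "1 \<le> a \<Longrightarrow> omega_coord (lam_min k nup num Tp Tm) a = Max (S_coords Tp Tm a)"
proof -
  let ?U = "\<Union>i\<in>{1..k}. {a. omega_coord (S_plus nup Tp Tm i) a \<noteq> 0}
                     \<union> {a. omega_coord (S_minus num Tp Tm i) a \<noteq> 0}"
  have "finite ?U" using in_Lambda_S[OF assms] finite_omega_support by auto
  moreover have "{a. Max (S_coords Tp Tm a) \<noteq> 0} \<subseteq> ?U"
  proof
    fix a assume "a \<in> {a. Max (S_coords Tp Tm a) \<noteq> 0}"
    moreover have "Max (S_coords Tp Tm a) \<in> S_coords Tp Tm a" using Max_in[OF S_coords_finite] by auto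
    ultimately show "a \<in> ?U" unfolding S_coords_def by force
  qed
  ultimately have fin: "finite {a. Max (S_coords Tp Tm a) \<noteq> 0}" by (rule finite_subset[rotated])
  show "in_Lambda (lam_min k nup num Tp Tm)" using in_Lambda_from_omega[OF fin] lam_min_eq by simp
  show "1 \<le> a \<Longrightarrow> omega_coord (lam_min k nup num Tp Tm) a = Max (S_coords Tp Tm a)"
    using omega_coord_from_omega[OF fin] lam_min_eq by simp
qed

lemma omega_coord_S_le_lam_min:
  assumes "tab_tuple Tp Tm" "i \<in> {1..k}" "1 \<le> a"
  shows "omega_coord (S_plus nup Tp Tm i) a \<le> omega_coord (lam_min k nup num Tp Tm) a"
    and "omega_coord (S_minus num Tp Tm i) a \<le> omega_coord (lam_min k nup num Tp Tm) a"
  using omega_coord_lam_min[OF assms(1,3)] Max_ge[OF S_coords_finite(1)] assms(2) by (auto simp: S_coords_def)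

lemma omega_coord_lam_min_le:
  assumes "tab_tuple Tp Tm" "1 \<le> a"
    and "\<And>i. i \<in> {1..k} \<Longrightarrow> omega_coord (S_plus nup Tp Tm i) a \<le> x \<and> omega_coord (S_minus num Tp Tm i) a \<le> x"
  shows "omega_coord (lam_min k nup num Tp Tm) a \<le> x"
proof -
  have "Max (S_coords Tp Tm a) \<in> S_coords Tp Tm a" using Max_in[OF S_coords_finite] by auto
  then show ?thesis using omega_coord_lam_min[OF assms(1,2)] assms(3) by (auto simp: S_coords_def)
qed

lemma alpha_partition_dominates:
  assumes b: "tab_tuple Tp Tm" and i: "i \<in> {1..k}" and x: "in_Lambda x"
    and xge: "\<And>a. 1 \<le> a \<Longrightarrow> omega_coord (lam_min k nup num Tp Tm) a \<le> omega_coord x a"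
  shows "is_partition (\<lambda>j. x j + cumwt Tp Tm i j - wt_tab (Tp i) j)"
    and "dom_le (eps_vec (nup i) (Tp i)) (\<lambda>j. x j + cumwt Tp Tm i j - wt_tab (Tp i) j)"
    and "dom_le (eps_vec (num i) (Tm i)) (\<lambda>j. x j + cumwt Tp Tm i j - wt_tab (Tp i) j)"
proof -
  note bs = tab_tupleD[OF b i]
  have h1: "omega_coord (S_plus nup Tp Tm i) a \<le> omega_coord x a" if "1 \<le> a" for a
    using omega_coord_S_le_lam_min(1)[OF b i that] xge[OF that] by linarith
  have h2: "omega_coord (S_minus num Tp Tm i) a \<le> omega_coord x a" if "1 \<le> a" for a
    using omega_coord_S_le_lam_min(2)[OF b i that] xge[OF that] by linarith
  show d1: "dom_le (eps_vec (nup i) (Tp i)) (\<lambda>j. x j + cumwt Tp Tm i j - wt_tab (Tp i) j)"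
    unfolding dom_le_def
  proof (intro allI impI)
    fix a :: nat assume a: "1 \<le> a"
    show "0 \<le> omega_coord (\<lambda>j. x j + cumwt Tp Tm i j - wt_tab (Tp i) j - eps_vec (nup i) (Tp i) j) a"
      using h1[OF a] unfolding omega_coord_def S_plus_def by linarith
  qed
  show "dom_le (eps_vec (num i) (Tm i)) (\<lambda>j. x j + cumwt Tp Tm i j - wt_tab (Tp i) j)"
    unfolding dom_le_def
  proof (intro allI impI)
    fix a :: nat assume a: "1 \<le> a"
    show "0 \<le> omega_coord (\<lambda>j. x j + cumwt Tp Tm i j - wt_tab (Tp i) j - eps_vec (num i) (Tm i) j) a"
      using h2[OF a] unfolding omega_coord_def S_minus_def by linarith
  qed
  show "is_partition (\<lambda>j. x j + cumwt Tp Tm i j - wt_tab (Tp i) j)"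
  proof (rule partitionI)
    show "in_Lambda (\<lambda>j. x j + cumwt Tp Tm i j - wt_tab (Tp i) j)"
      using x in_Lambda_cumwt[OF b] i in_Lambda_wt_tab[of "nup i" "Tp i"] bs
      by (intro in_Lambda_diff in_Lambda_add) auto
    fix a :: nat assume a: "1 \<le> a"
    have "omega_coord (eps_vec (nup i) (Tp i)) a \<ge> 0" using omega_coord_eps_vec[OF _ _ a] bs by simp
    then show "omega_coord (\<lambda>j. x j + cumwt Tp Tm i j - wt_tab (Tp i) j) a \<ge> 0"
      using d1 a unfolding dom_le_def by (auto simp: omega_coord_def)
  qed
qed

lemma lam_T_partition:
  assumes b: "tab_tuple Tp Tm" and i: "i \<in> {1..k}"
  shows "is_partition (lam_T k nup num Tp Tm i)"
proof (rule partitionI)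
  note bs = tab_tupleD[OF b i]
  show "in_Lambda (lam_T k nup num Tp Tm i)" unfolding lam_T_def
    using in_Lambda_lam_min[OF b] in_Lambda_cumwt[OF b] i by (intro in_Lambda_add) auto
  fix a :: nat assume a: "1 \<le> a"
  have "omega_coord (eps_vec (nup i) (Tp i)) a + omega_coord (wt_tab (Tp i)) a \<ge> 0"
    using omega_coord_eps_vec_wt_tab_nonneg[OF _ _ a] bs by blast
  moreover have "omega_coord (S_plus nup Tp Tm i) a \<le> omega_coord (lam_min k nup num Tp Tm) a"
    by (rule omega_coord_S_le_lam_min(1)[OF b i a])
  ultimately show "omega_coord (lam_T k nup num Tp Tm i) a \<ge> 0"
    by (auto simp: omega_coord_def S_plus_def lam_T_def)
qed

lemma cumwt_prev:
  assumes tot: "\<And>j. cumwt Tp Tm k j = wt_tab (Tm 1) j - wt_tab (Tp 1) j" and i: "i \<in> {1..k}"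
  shows "cumwt Tp Tm (prev k i) j = cumwt Tp Tm i j - wt_tab (Tp i) j + wt_tab (Tm i) j"
proof (cases "i = 1")
  case True then show ?thesis using tot by (simp add: prev_def cumwt_def)
next
  case False
  then obtain i' where i': "i = Suc i'" "1 \<le> i'" using i by (cases i) auto
  then show ?thesis using cumwt_Suc[OF i'(2), of Tp Tm j] False by (simp add: prev_def)
qed

lemma Dtab_cumwt_total: "(Tp, Tm) \<in> Dtab k nup num \<Longrightarrow> cumwt Tp Tm k j = wt_tab (Tm 1) j - wt_tab (Tp 1) j"
  using CLR_tuple_cumwt_total by (auto simp: Dtab_iff)

definition shift_lam :: "lwt \<Rightarrow> (nat \<Rightarrow> tab) \<Rightarrow> (nat \<Rightarrow> tab) \<Rightarrow> nat \<Rightarrow> lwt" where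
  "shift_lam \<delta> Tp Tm i = (if i \<in> {1..k} then (\<lambda>j. lam_T k nup num Tp Tm i j + \<delta> j) else (\<lambda>_. 0))"

definition shift_alpha :: "lwt \<Rightarrow> (nat \<Rightarrow> tab) \<Rightarrow> (nat \<Rightarrow> tab) \<Rightarrow> nat \<Rightarrow> lwt" where
  "shift_alpha \<delta> Tp Tm i =
     (if i \<in> {1..k} then (\<lambda>j. lam_T k nup num Tp Tm i j + \<delta> j - wt_tab (Tp i) j) else (\<lambda>_. 0))"

lemma CLR_tuple_shift:
  assumes b: "tab_tuple Tp Tm" and tot: "\<And>j. cumwt Tp Tm k j = wt_tab (Tm 1) j - wt_tab (Tp 1) j"
    and d: "is_partition \<delta>"
  shows "CLR_tuple Tp Tm (shift_lam \<delta> Tp Tm) (shift_alpha \<delta> Tp Tm)"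
proof -
  let ?x = "\<lambda>j. lam_min k nup num Tp Tm j + \<delta> j"
  have xl: "in_Lambda ?x" using in_Lambda_lam_min[OF b] d by (intro in_Lambda_add) (auto simp: is_partition_def)
  have xge: "omega_coord (lam_min k nup num Tp Tm) a \<le> omega_coord ?x a" if "1 \<le> a" for a
    using d that by (auto simp: is_partition_def omega_coord_def)
  have al: "shift_alpha \<delta> Tp Tm i = (\<lambda>j. ?x j + cumwt Tp Tm i j - wt_tab (Tp i) j)" if "i \<in> {1..k}" for i
    using that by (auto simp: shift_alpha_def lam_T_def fun_eq_iff)
  have "is_ptuple k (shift_lam \<delta> Tp Tm)"
    using partition_add[OF lam_T_partition[OF b] d] by (simp add: is_ptuple_def shift_lam_def)
  moreover have "is_ptuple k (shift_alpha \<delta> Tp Tm)"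
    using alpha_partition_dominates(1)[OF b _ xl xge] al by (simp add: is_ptuple_def shift_alpha_def)
  moreover have "Tp i \<in> CLR (shift_lam \<delta> Tp Tm i) (shift_alpha \<delta> Tp Tm i) (nup i)
      \<and> Tm i \<in> CLR (shift_lam \<delta> Tp Tm (prev k i)) (shift_alpha \<delta> Tp Tm i) (num i)"
    if i: "i \<in> {1..k}" for i
    using tab_tupleD[OF b i] alpha_partition_dominates(2,3)[OF b i xl xge] al[OF i] i
      prev_in_range[OF k i] cumwt_prev[OF tot i]
    by (auto simp: CLR_def shift_lam_def lam_T_def)
  ultimately show ?thesis unfolding CLR_tuple_def by blast
qed

lemma boxes_shift_lam:
  assumes "tab_tuple Tp Tm" "is_partition \<delta>"
  shows "(\<Sum>i\<in>{1..k}. boxes (shift_lam \<delta> Tp Tm i))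
    = k * boxes \<delta> + (\<Sum>i\<in>{1..k}. boxes (lam_T k nup num Tp Tm i))"
proof -
  have "(\<Sum>i\<in>{1..k}. boxes (shift_lam \<delta> Tp Tm i))
      = (\<Sum>i\<in>{1..k}. boxes (lam_T k nup num Tp Tm i) + boxes \<delta>)"
    by (rule sum.cong) (simp_all add: shift_lam_def boxes_add[OF lam_T_partition[OF assms(1)] assms(2)])
  then show ?thesis by (simp add: sum.distrib)
qed

lemma CLR_tuple_lam_one_minus_lam_min:
  assumes b: "tab_tuple Tp Tm" and v: "CLR_tuple Tp Tm lam \<alpha>"
  shows "is_partition (\<lambda>j. lam 1 j - lam_min k nup num Tp Tm j)"
proof (rule partitionI)
  have "is_partition (lam 1)" using v k by (auto simp: CLR_tuple_def is_ptuple_def)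
  then show "in_Lambda (\<lambda>j. lam 1 j - lam_min k nup num Tp Tm j)"
    using in_Lambda_lam_min[OF b] by (intro in_Lambda_diff) (auto simp: is_partition_def)
  fix a :: nat assume a: "1 \<le> a"
  have "omega_coord (lam_min k nup num Tp Tm) a \<le> omega_coord (lam 1) a"
    by (rule omega_coord_lam_min_le[OF b a]) (use CLR_tuple_omega_le[OF v _ a] in blast)
  then show "0 \<le> omega_coord (\<lambda>j. lam 1 j - lam_min k nup num Tp Tm j) a"
    by (simp add: omega_coord_def)
qed

lemma CLR_tuple_shift_eq:
  assumes v: "CLR_tuple Tp Tm lam \<alpha>"
  defines "\<delta> \<equiv> \<lambda>j. lam 1 j - lam_min k nup num Tp Tm j"
  shows "shift_lam \<delta> Tp Tm = lam" and "shift_alpha \<delta> Tp Tm = \<alpha>"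
proof -
  have "is_ptuple k lam" "is_ptuple k \<alpha>" using v by (auto simp: CLR_tuple_def)
  moreover have "lam i j = lam_T k nup num Tp Tm i j + \<delta> j" if "i \<in> {1..k}" for i j
    using CLR_tuple_lam_eq[OF v that] by (simp add: lam_T_def \<delta>_def)
  moreover have "\<alpha> i j = lam i j - wt_tab (Tp i) j" if "i \<in> {1..k}" for i j
    using CLR_tuple_alpha_eq[OF v that] .
  ultimately show "shift_lam \<delta> Tp Tm = lam" "shift_alpha \<delta> Tp Tm = \<alpha>"
    by (auto simp: fun_eq_iff shift_lam_def shift_alpha_def is_ptuple_def)
qed

lemma Dtab_entry_le:
  assumes D: "(Tp, Tm) \<in> Dtab k nup num" and i: "i \<in> {1..k}"
  shows "Tp i p \<le> (\<Sum>i\<in>{1..k}. boxes (lam_T k nup num Tp Tm i))"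
    and "Tm i p \<le> (\<Sum>i\<in>{1..k}. boxes (lam_T k nup num Tp Tm i))"
proof -
  have b: "tab_tuple Tp Tm" using D by (simp add: Dtab_iff)
  note bs = tab_tupleD[OF b i]
  have tot: "\<And>j. cumwt Tp Tm k j = wt_tab (Tm 1) j - wt_tab (Tp 1) j" using Dtab_cumwt_total[OF D] .
  let ?al = "\<lambda>j. lam_min k nup num Tp Tm j + cumwt Tp Tm i j - wt_tab (Tp i) j"
  have alp: "is_partition ?al" by (rule alpha_partition_dominates(1)[OF b i in_Lambda_lam_min[OF b]]) simp
  have le: "boxes (lam_T k nup num Tp Tm l) \<le> (\<Sum>i\<in>{1..k}. boxes (lam_T k nup num Tp Tm i))"
    if "l \<in> {1..k}" for l
    by (rule member_le_sum) (use that in auto)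
  show "Tp i p \<le> (\<Sum>i\<in>{1..k}. boxes (lam_T k nup num Tp Tm i))"
  proof (cases "Tp i p = 0")
    case False
    then have x: "1 \<le> Tp i p" by simp
    have "1 \<le> wt_tab (Tp i) (Tp i p)" using wt_tab_pos[of _ "Tp i" p "Tp i p"] x bs by blast
    moreover have "?al (Tp i p) \<ge> 0" using partition_nonneg[OF alp] .
    ultimately have "1 \<le> lam_T k nup num Tp Tm i (Tp i p)" by (simp add: lam_T_def)
    then have "Tp i p \<le> boxes (lam_T k nup num Tp Tm i)"
      using index_le_boxes[OF lam_T_partition[OF b i] x] by simp
    then show ?thesis using le[OF i] by linarith
  qed simp
  show "Tm i p \<le> (\<Sum>i\<in>{1..k}. boxes (lam_T k nup num Tp Tm i))"
  proof (cases "Tm i p = 0")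
    case False
    then have x: "1 \<le> Tm i p" by simp
    have pi: "prev k i \<in> {1..k}" using prev_in_range[OF k i] .
    have "1 \<le> wt_tab (Tm i) (Tm i p)" using wt_tab_pos[of _ "Tm i" p "Tm i p"] x bs by blast
    moreover have "?al (Tm i p) \<ge> 0" using partition_nonneg[OF alp] .
    ultimately have "1 \<le> lam_T k nup num Tp Tm (prev k i) (Tm i p)"
      using cumwt_prev[OF tot i] by (simp add: lam_T_def)
    then have "Tm i p \<le> boxes (lam_T k nup num Tp Tm (prev k i))"
      using index_le_boxes[OF lam_T_partition[OF b pi] x] by simp
    then show ?thesis using le[OF pi] by linarith
  qed simp
qed

lemma finite_Dtab_graded:
  "finite {T \<in> Dtab k nup num. (\<Sum>i\<in>{1..k}. boxes (lam_T k nup num (fst T) (snd T) i)) = n}"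
proof -
  let ?B = "\<Union>i\<in>{1..k}. {T \<in> SST (nup i). \<forall>p. T p \<le> n} \<union> {T \<in> SST (num i). \<forall>p. T p \<le> n}"
  let ?F = "{f. \<forall>i. (i \<in> {1..k} \<longrightarrow> f i \<in> ?B) \<and> (i \<notin> {1..k} \<longrightarrow> f i = (\<lambda>_. 0))}"
  have "finite ?B" using parts finite_SST_entries_le by auto
  then have "finite ?F" by (intro finite_set_of_finite_funs) auto
  moreover have "{T \<in> Dtab k nup num. (\<Sum>i\<in>{1..k}. boxes (lam_T k nup num (fst T) (snd T) i)) = n}
      \<subseteq> ?F \<times> ?F"
  proof
    fix T assume T: "T \<in> {T \<in> Dtab k nup num. (\<Sum>i\<in>{1..k}. boxes (lam_T k nup num (fst T) (snd T) i)) = n}"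
    obtain Tp Tm where e: "T = (Tp, Tm)" by (cases T)
    have D: "(Tp, Tm) \<in> Dtab k nup num" and n: "n = (\<Sum>i\<in>{1..k}. boxes (lam_T k nup num Tp Tm i))"
      using T e by auto
    have "tab_tuple Tp Tm" using D by (simp add: Dtab_iff)
    then have "Tp \<in> ?F \<and> Tm \<in> ?F"
      using Dtab_entry_le[OF D] tab_tupleD unfolding n tab_tuple_def by blast
    then show "T \<in> ?F \<times> ?F" using e by simp
  qed
  ultimately show ?thesis by (meson finite_SigmaI finite_subset)
qed

section \<open>Admissible pairs versus distinguished tableaux\<close>

definition ptuple_pairs :: "nat \<Rightarrow> ((nat \<Rightarrow> lwt) \<times> (nat \<Rightarrow> lwt)) set" where
  "ptuple_pairs n = {(\<alpha>, lam). is_ptuple k \<alpha> \<and> is_ptuple k lam \<and> (\<Sum>i\<in>{1..k}. boxes (lam i)) = n}"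

definition CLR_tuples :: "(nat \<Rightarrow> lwt) \<times> (nat \<Rightarrow> lwt) \<Rightarrow> ((nat \<Rightarrow> tab) \<times> (nat \<Rightarrow> tab)) set" where
  "CLR_tuples p = {(Tp, Tm).
     (\<forall>i\<in>{1..k}. Tp i \<in> CLR (snd p i) (fst p i) (nup i) \<and> Tm i \<in> CLR (snd p (prev k i)) (fst p i) (num i))
     \<and> (\<forall>i. i \<notin> {1..k} \<longrightarrow> Tp i = (\<lambda>_. 0) \<and> Tm i = (\<lambda>_. 0))}"

definition shift_pairs :: "nat \<Rightarrow> (lwt \<times> ((nat \<Rightarrow> tab) \<times> (nat \<Rightarrow> tab))) set" where
  "shift_pairs n = {(\<delta>, T). is_partition \<delta> \<and> T \<in> Dtab k nup num \<and>
      k * boxes \<delta> + (\<Sum>i\<in>{1..k}. boxes (lam_T k nup num (fst T) (snd T) i)) = n}"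

definition to_shift ::
  "((nat \<Rightarrow> lwt) \<times> (nat \<Rightarrow> lwt)) \<times> (nat \<Rightarrow> tab) \<times> (nat \<Rightarrow> tab) \<Rightarrow> lwt \<times> (nat \<Rightarrow> tab) \<times> (nat \<Rightarrow> tab)"
  where "to_shift = (\<lambda>((\<alpha>, lam), Tp, Tm). ((\<lambda>j. lam 1 j - lam_min k nup num Tp Tm j), Tp, Tm))"

definition from_shift ::
  "lwt \<times> (nat \<Rightarrow> tab) \<times> (nat \<Rightarrow> tab) \<Rightarrow> ((nat \<Rightarrow> lwt) \<times> (nat \<Rightarrow> lwt)) \<times> (nat \<Rightarrow> tab) \<times> (nat \<Rightarrow> tab)"
  where "from_shift = (\<lambda>(\<delta>, Tp, Tm). ((shift_alpha \<delta> Tp Tm, shift_lam \<delta> Tp Tm), Tp, Tm))"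

lemma mem_CLR_Sigma_iff:
  "((\<alpha>, lam), (Tp, Tm)) \<in> Sigma (ptuple_pairs n) CLR_tuples \<longleftrightarrow> CLR_tuple Tp Tm lam \<alpha>
     \<and> (\<forall>i. i \<notin> {1..k} \<longrightarrow> Tp i = (\<lambda>_. 0) \<and> Tm i = (\<lambda>_. 0)) \<and> (\<Sum>i\<in>{1..k}. boxes (lam i)) = n"
  by (auto simp: ptuple_pairs_def CLR_tuples_def CLR_tuple_def)

lemma card_CLR_tuples:
  "(\<Prod>i\<in>{1..k}. lr_coeff (snd p i) (fst p i) (nup i) * lr_coeff (snd p (prev k i)) (fst p i) (num i))
    = card (CLR_tuples p)"
proof -
  let ?C = "\<lambda>i. CLR (snd p i) (fst p i) (nup i) \<times> CLR (snd p (prev k i)) (fst p i) (num i)"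
  let ?F = "\<lambda>T::(nat \<Rightarrow> tab) \<times> (nat \<Rightarrow> tab). restrict (\<lambda>i. (fst T i, snd T i)) {1..k}"
  let ?G = "\<lambda>f. ((\<lambda>i. if i \<in> {1..k} then fst (f i) else (\<lambda>_. 0)),
                 (\<lambda>i. if i \<in> {1..k} then snd (f i) else (\<lambda>_. 0)))"
  have "bij_betw ?F (CLR_tuples p) (PiE {1..k} ?C)"
  proof (rule bij_betw_byWitness[where f'="?G"])
    show "\<forall>a\<in>CLR_tuples p. ?G (?F a) = a" by (auto simp: CLR_tuples_def fun_eq_iff)
    show "\<forall>a'\<in>PiE {1..k} ?C. ?F (?G a') = a'" by (auto simp: fun_eq_iff PiE_def extensional_def)
    show "?F ` CLR_tuples p \<subseteq> PiE {1..k} ?C" by (auto simp: CLR_tuples_def)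
    show "?G ` PiE {1..k} ?C \<subseteq> CLR_tuples p"
    proof
      fix y assume "y \<in> ?G ` PiE {1..k} ?C"
      then obtain x where x: "x \<in> PiE {1..k} ?C" "y = ?G x" by blast
      have "\<And>i. i \<in> {1..k} \<Longrightarrow> x i \<in> ?C i" using x(1) by (simp add: PiE_iff)
      then show "y \<in> CLR_tuples p" using x(2) unfolding CLR_tuples_def by (auto simp: mem_Times_iff)
    qed
  qed
  then have "card (CLR_tuples p) = card (PiE {1..k} ?C)" by (rule bij_betw_same_card)
  also have "\<dots> = (\<Prod>i\<in>{1..k}. card (?C i))" by (rule card_PiE) simp
  finally show ?thesis by (simp add: lr_coeff_def card_cartesian_product)
qed

lemma to_shift_props:
  assumes x: "x \<in> Sigma (ptuple_pairs n) CLR_tuples"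
  shows "to_shift x \<in> shift_pairs n" and "from_shift (to_shift x) = x"
proof -
  obtain \<alpha> lam Tp Tm where e: "x = ((\<alpha>, lam), (Tp, Tm))" by (metis prod.exhaust)
  have v: "CLR_tuple Tp Tm lam \<alpha>" and z: "\<forall>i. i \<notin> {1..k} \<longrightarrow> Tp i = (\<lambda>_. 0) \<and> Tm i = (\<lambda>_. 0)"
    and s: "(\<Sum>i\<in>{1..k}. boxes (lam i)) = n" using x e mem_CLR_Sigma_iff by auto
  have b: "tab_tuple Tp Tm" using CLR_tuple_tab_tuple[OF v z] .
  define \<delta> where "\<delta> = (\<lambda>j. lam 1 j - lam_min k nup num Tp Tm j)"
  have h: "to_shift x = (\<delta>, (Tp, Tm))" by (simp add: to_shift_def e \<delta>_def)
  have dp: "is_partition \<delta>" unfolding \<delta>_def by (rule CLR_tuple_lam_one_minus_lam_min[OF b v])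
  have "shift_lam \<delta> Tp Tm = lam" "shift_alpha \<delta> Tp Tm = \<alpha>"
    using CLR_tuple_shift_eq[OF v] by (simp_all add: \<delta>_def)
  then have "from_shift (to_shift x) = ((\<alpha>, lam), (Tp, Tm))" by (simp add: h from_shift_def)
  then show "from_shift (to_shift x) = x" using e by simp
  have "(Tp, Tm) \<in> Dtab k nup num" using b v by (auto simp: Dtab_iff)
  then show "to_shift x \<in> shift_pairs n"
    using h s dp boxes_shift_lam[OF b dp] \<open>shift_lam \<delta> Tp Tm = lam\<close> by (simp add: shift_pairs_def)
qed

lemma from_shift_props:
  assumes y: "y \<in> shift_pairs n"
  shows "from_shift y \<in> Sigma (ptuple_pairs n) CLR_tuples" and "to_shift (from_shift y) = y"
proof -
  obtain \<delta> Tp Tm where e: "y = (\<delta>, (Tp, Tm))" by (metis prod.exhaust)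
  have dp: "is_partition \<delta>" and D: "(Tp, Tm) \<in> Dtab k nup num"
    and s: "k * boxes \<delta> + (\<Sum>i\<in>{1..k}. boxes (lam_T k nup num Tp Tm i)) = n"
    using y e by (auto simp: shift_pairs_def)
  have b: "tab_tuple Tp Tm" using D by (simp add: Dtab_iff)
  have g: "from_shift y = ((shift_alpha \<delta> Tp Tm, shift_lam \<delta> Tp Tm), (Tp, Tm))"
    by (simp add: e from_shift_def)
  have "CLR_tuple Tp Tm (shift_lam \<delta> Tp Tm) (shift_alpha \<delta> Tp Tm)"
    by (rule CLR_tuple_shift[OF b Dtab_cumwt_total[OF D] dp])
  moreover have "\<forall>i. i \<notin> {1..k} \<longrightarrow> Tp i = (\<lambda>_. 0) \<and> Tm i = (\<lambda>_. 0)" using b by (simp add: tab_tuple_def)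
  ultimately show "from_shift y \<in> Sigma (ptuple_pairs n) CLR_tuples"
    unfolding g mem_CLR_Sigma_iff using boxes_shift_lam[OF b dp] s by simp
  have "1 \<in> {1..k}" using k by simp
  then have "to_shift (from_shift y) = (\<delta>, (Tp, Tm))"
    by (simp add: g to_shift_def shift_lam_def lam_T_def cumwt_def)
  then show "to_shift (from_shift y) = y" using e by simp
qed

lemma bij_to_shift: "bij_betw to_shift (Sigma (ptuple_pairs n) CLR_tuples) (shift_pairs n)"
  by (rule bij_betw_byWitness[where f'=from_shift]) (use to_shift_props from_shift_props in blast)+

lemma shift_pairs_UN: "shift_pairs n = (\<Union>a\<in>{0..n}. {\<delta>. is_partition \<delta> \<and> k * boxes \<delta> = a}
     \<times> {T \<in> Dtab k nup num. (\<Sum>i\<in>{1..k}. boxes (lam_T k nup num (fst T) (snd T) i)) = n - a})"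
  by (auto simp: shift_pairs_def)

lemma card_shift_pairs: "card (shift_pairs n) = (\<Sum>a=0..n. card {\<delta>. is_partition \<delta> \<and> k * boxes \<delta> = a}
     * card {T \<in> Dtab k nup num. (\<Sum>i\<in>{1..k}. boxes (lam_T k nup num (fst T) (snd T) i)) = n - a})"
    and finite_shift_pairs: "finite (shift_pairs n)"
proof -
  let ?P = "\<lambda>a. {\<delta>. is_partition \<delta> \<and> k * boxes \<delta> = a}"
  let ?D = "\<lambda>a. {T \<in> Dtab k nup num. (\<Sum>i\<in>{1..k}. boxes (lam_T k nup num (fst T) (snd T) i)) = n - a}"
  have fin: "finite (?P a \<times> ?D a)" for a
    using finite_partitions_scaled_boxes k finite_Dtab_graded by simp
  have disj: "\<forall>a\<in>{0..n}. \<forall>b\<in>{0..n}. a \<noteq> b \<longrightarrow> (?P a \<times> ?D a) \<inter> (?P b \<times> ?D b) = {}" by auto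
  have "card (\<Union>a\<in>{0..n}. ?P a \<times> ?D a) = (\<Sum>a=0..n. card (?P a \<times> ?D a))"
    by (rule card_UN_disjoint) (use fin disj in auto)
  then show "card (shift_pairs n) = (\<Sum>a=0..n. card (?P a) * card (?D a))"
    by (simp add: shift_pairs_UN card_cartesian_product)
  show "finite (shift_pairs n)" unfolding shift_pairs_UN using fin by blast
qed

lemma coeff_m_inf_quotient:
  "infsum (\<lambda>p. real (\<Prod>i\<in>{1..k}. lr_coeff (snd p i) (fst p i) (nup i)
                                    * lr_coeff (snd p (prev k i)) (fst p i) (num i)))
       {(\<alpha>, lam). is_ptuple k \<alpha> \<and> is_ptuple k lam \<and> (\<Sum>i\<in>{1..k}. boxes (lam i)) = n}
   = (\<Sum>a=0..n. real (card {\<delta>. is_partition \<delta> \<and> k * boxes \<delta> = a})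
     * real (card {T \<in> Dtab k nup num. (\<Sum>i\<in>{1..k}. boxes (lam_T k nup num (fst T) (snd T) i)) = n - a}))"
proof -
  have g: "(\<lambda>p. real (\<Prod>i\<in>{1..k}. lr_coeff (snd p i) (fst p i) (nup i)
                                    * lr_coeff (snd p (prev k i)) (fst p i) (num i)))
      = (\<lambda>p. real (card (CLR_tuples p)))"
    by (simp only: card_CLR_tuples)
  have "finite (Sigma (ptuple_pairs n) CLR_tuples)"
    using bij_betw_finite[OF bij_to_shift] finite_shift_pairs by blast
  then have "infsum (\<lambda>p. real (card (CLR_tuples p))) (ptuple_pairs n)
      = real (card (Sigma (ptuple_pairs n) CLR_tuples))"
    by (rule infsum_card_eq_card_Sigma)
  also have "\<dots> = real (card (shift_pairs n))" using bij_betw_same_card[OF bij_to_shift] by simp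
  finally show ?thesis unfolding g ptuple_pairs_def card_shift_pairs by simp
qed

end

lemma prodP_nonzero: "prodP k \<noteq> 0"
proof -
  have "fps_nth (prodP k) 0 = 1" by (simp add: prodP_def)
  then show ?thesis by auto
qed

theorem mainTheorem11:
  fixes k :: nat and nup num :: "nat \<Rightarrow> lwt"
  assumes "1 \<le> k"
    and "\<forall>i\<in>{1..k}. is_partition (nup i) \<and> is_partition (num i)"
  shows "m_inf k nup num / prodP k =
     Abs_fps (\<lambda>n. real (card {\<delta>. is_partition \<delta> \<and> k * boxes \<delta> = n}))
     * Abs_fps (\<lambda>n. real (card {T \<in> Dtab k nup num.
          (\<Sum>i\<in>{1..k}. boxes (lam_T k nup num (fst T) (snd T) i)) = n}))"
proof -
  define F where "F = Abs_fps (\<lambda>n.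
     infsum (\<lambda>p. real (\<Prod>i\<in>{1..k}. lr_coeff (snd p i) (fst p i) (nup i)
                                    * lr_coeff (snd p (prev k i)) (fst p i) (num i)))
       {(\<alpha>, lam). is_ptuple k \<alpha> \<and> is_ptuple k lam \<and> (\<Sum>i\<in>{1..k}. boxes (lam i)) = n})"
  have "m_inf k nup num = prodP k * F" by (simp add: m_inf_def F_def)
  then have "m_inf k nup num / prodP k = F" using prodP_nonzero by simp
  also have "F = Abs_fps (\<lambda>n. real (card {\<delta>. is_partition \<delta> \<and> k * boxes \<delta> = n}))
     * Abs_fps (\<lambda>n. real (card {T \<in> Dtab k nup num.
          (\<Sum>i\<in>{1..k}. boxes (lam_T k nup num (fst T) (snd T) i)) = n}))"
    by (rule fps_ext) (simp only: F_def fps_mult_nth fps_nth_Abs_fps coeff_m_inf_quotient[OF assms])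
  finally show ?thesis .
qed

end
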